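(* Let $l\ge1$ and let $(X_l,M_l),\dots,(X_1,M_1)$ be transformation monoids. Then the wreath product monoid $M_l\circ\cdots\circ M_1$ embeds (as a monoid) in $\mathrm{Ell}(r_0,T(|X_l|,\dots,|X_1|))$.
   Context: A transformation monoid $(X,M)$ is a nonempty set $X$ with a submonoid $M$ of the monoid of all full transformations of $X$ (maps written on the right). For $X=X_l\times\cdots\times X_1$ and $i\le l$, $\pi_i$ is the projection onto $X_i$. A full transformation $\varphi$ of $X$ is sequential if for every $i$, elements with the same last $i$ components have images with the same last $i$ components. Given $(a_{i-1},\dots,a_1)$, the local map $(\cdot,a_{i-1},\dots,a_1)\varphi\pi_i:X_i\to X_i$ sends $x$ to the $i$-th component of $(\dots,x,a_{i-1},\dots,a_1)\varphi$ (well defined by sequentiality). The wreath product $M_l\circ\cdots\circ M_1$ is the monoid of all sequential $\varphi$ with $\varphi\pi_1$ (as a map on $X_1$) in $M_1$ and every local map $(\cdot,a_{i-1},\dots,a_1)\varphi\pi_i$ in $M_i$. $\mathrm{Ell}(r_0,T)$ is the monoid of depth-preserving, distance-non-increasing self-maps of the vertex set of the rooted tree $(r_0,T)$ (depth = distance to $r_0$). $T(n_l,\dots,n_1)$ is the rooted tree of depth $l$ in which each vertex of depth $i-1$ has exactly $n_i$ sons. *)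

theory Defs
  imports "HOL-Library.FuncSet"
begin

(* Transformations of a set A are represented as extensional functions A \<rightarrow>\<^sub>E A;
   maps are written on the right, so the product "f then g" is  compose A g f. *)

definition transformation_monoid :: "'a set \<Rightarrow> ('a \<Rightarrow> 'a) set \<Rightarrow> bool" where
  "transformation_monoid A M \<longleftrightarrow> A \<noteq> {} \<and> M \<subseteq> (A \<rightarrow>\<^sub>E A) \<and>
     restrict id A \<in> M \<and> (\<forall>f\<in>M. \<forall>g\<in>M. compose A g f \<in> M)"

definition prodX :: "nat \<Rightarrow> (nat \<Rightarrow> 'a set) \<Rightarrow> (nat \<Rightarrow> 'a) set" where
  "prodX l X = (\<Pi>\<^sub>E i\<in>{1..l}. X i)"

definition sequential :: "nat \<Rightarrow> (nat \<Rightarrow> 'a set) \<Rightarrow> ((nat \<Rightarrow> 'a) \<Rightarrow> (nat \<Rightarrow> 'a)) \<Rightarrow> bool" where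
  "sequential l X \<phi> \<longleftrightarrow> (\<forall>i\<in>{1..l}. \<forall>x\<in>prodX l X. \<forall>y\<in>prodX l X.
      (\<forall>j\<in>{1..i}. x j = y j) \<longrightarrow> (\<forall>j\<in>{1..i}. \<phi> x j = \<phi> y j))"

(* wreath product M_l \<circ> ... \<circ> M_1: the local map (.,a_{i-1},...,a_1)\<phi>\<pi>_i is in M_i,
   i.e. some m \<in> M_i agrees with it (for i = 1 this says \<phi>\<pi>_1 \<in> M_1) *)
definition wreath :: "nat \<Rightarrow> (nat \<Rightarrow> 'a set) \<Rightarrow> (nat \<Rightarrow> ('a \<Rightarrow> 'a) set)
                      \<Rightarrow> ((nat \<Rightarrow> 'a) \<Rightarrow> (nat \<Rightarrow> 'a)) set" where
  "wreath l X M = {\<phi> \<in> prodX l X \<rightarrow>\<^sub>E prodX l X. sequential l X \<phi> \<and>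
     (\<forall>i\<in>{1..l}. \<forall>a\<in>prodX l X. \<exists>m\<in>M i. \<forall>z\<in>prodX l X.
         (\<forall>j\<in>{1..<i}. z j = a j) \<longrightarrow> \<phi> z i = m (z i))}"

definition gdist :: "'v set \<Rightarrow> ('v \<Rightarrow> 'v \<Rightarrow> bool) \<Rightarrow> 'v \<Rightarrow> 'v \<Rightarrow> nat" where
  "gdist V adj u v = (LEAST n. \<exists>p. length p = Suc n \<and> hd p = u \<and> last p = v \<and>
      set p \<subseteq> V \<and> (\<forall>k<n. adj (p ! k) (p ! Suc k)))"

definition Ell :: "'v set \<Rightarrow> ('v \<Rightarrow> 'v \<Rightarrow> bool) \<Rightarrow> 'v \<Rightarrow> ('v \<Rightarrow> 'v) set" where
  "Ell V adj r0 = {f \<in> V \<rightarrow>\<^sub>E V.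
      (\<forall>u\<in>V. gdist V adj (f u) r0 = gdist V adj u r0) \<and>
      (\<forall>u\<in>V. \<forall>v\<in>V. gdist V adj (f u) (f v) \<le> gdist V adj u v)}"

(* The rooted tree T(n_l,...,n_1) with n_i = |N i|: a vertex of depth k is a list
   [a_1,...,a_k] with a_j \<in> N j; the root is []; the sons of a vertex of depth i-1
   are its extensions by an element of N i, so it has |N i| = n_i sons. *)
definition tree_verts :: "nat \<Rightarrow> (nat \<Rightarrow> 'b set) \<Rightarrow> 'b list set" where
  "tree_verts l N = {xs. length xs \<le> l \<and> (\<forall>j<length xs. xs ! j \<in> N (Suc j))}"

definition tree_adj :: "'b list \<Rightarrow> 'b list \<Rightarrow> bool" where
  "tree_adj u v \<longleftrightarrow> (v \<noteq> [] \<and> u = butlast v) \<or> (u \<noteq> [] \<and> v = butlast u)"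

definition monoid_embeds :: "'a set \<Rightarrow> ('a \<Rightarrow> 'a) set \<Rightarrow> 'b set \<Rightarrow> ('b \<Rightarrow> 'b) set \<Rightarrow> bool" where
  "monoid_embeds A W B E \<longleftrightarrow> (\<exists>h. h \<in> W \<rightarrow> E \<and> inj_on h W \<and>
      h (restrict id A) = restrict id B \<and>
      (\<forall>\<phi>\<in>W. \<forall>\<psi>\<in>W. h (compose A \<psi> \<phi>) = compose B (h \<psi>) (h \<phi>)))"

end

theory Submission
  imports Defs "HOL-Library.Sublist"
begin

text \<open>Through bijections \<open>G\<^sub>i : X\<^sub>i \<rightarrow> N\<^sub>i\<close> a tuple \<open>x\<close> becomes the branch
  \<open>[G\<^sub>1 x\<^sub>1, \<dots>, G\<^sub>l x\<^sub>l]\<close> of the tree, and a vertex of depth \<open>k\<close> is the common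
  prefix of length \<open>k\<close> of the branches through it. A sequential map \<open>\<phi>\<close> acts on such a
  vertex by applying \<open>\<phi>\<close> to any tuple through it and cutting the image branch back to
  depth \<open>k\<close>; sequentiality says exactly that the result does not depend on the chosen
  tuple. This action preserves depth and commutes with taking prefixes, so it maps edges
  to edges and does not increase distances; the same independence makes it multiplicative,
  and \<open>\<phi>\<close> is recovered from its action on the leaves. The wreath product consists of
  sequential maps, so it embeds.\<close>

definition is_walk :: "'v set \<Rightarrow> ('v \<Rightarrow> 'v \<Rightarrow> bool) \<Rightarrow> 'v \<Rightarrow> 'v \<Rightarrow> 'v list \<Rightarrow> bool" where
  "is_walk V adj u v p \<longleftrightarrow> p \<noteq> [] \<and> hd p = u \<and> last p = v \<and> set p \<subseteq> V \<and> successively adj p"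

lemma gdist_eq_Least_walk:
  "gdist V adj u v = (LEAST n. \<exists>p. length p = Suc n \<and> is_walk V adj u v p)"
  unfolding gdist_def is_walk_def
  by (rule arg_cong[where f = Least], rule ext) (auto simp: successively_conv_nth)

lemma gdist_le_walk:
  assumes "is_walk V adj u v p"
  shows "gdist V adj u v \<le> length p - 1"
  unfolding gdist_eq_Least_walk
  by (rule Least_le) (use assms in \<open>auto simp: is_walk_def\<close>)

lemma shortest_walk_exists:
  assumes "is_walk V adj u v p"
  obtains q where "length q = Suc (gdist V adj u v)" "is_walk V adj u v q"
proof -
  have "\<exists>n q. length q = Suc n \<and> is_walk V adj u v q"
    using assms by (intro exI[of _ "length p - 1"] exI[of _ p]) (auto simp: is_walk_def)
  then have "\<exists>q. length q = Suc (gdist V adj u v) \<and> is_walk V adj u v q"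
    unfolding gdist_eq_Least_walk by (rule LeastI_ex)
  with that show ?thesis by blast
qed

lemma is_walk_rev:
  assumes "\<And>x y. adj x y \<Longrightarrow> adj y x" "is_walk V adj u v p"
  shows "is_walk V adj v u (rev p)"
  using assms by (auto simp: is_walk_def hd_rev last_rev successively_rev intro: successively_mono)

lemma is_walk_append:
  assumes "is_walk V adj u w p" "is_walk V adj w v q"
  shows "is_walk V adj u v (p @ tl q)"
  using assms by (cases q) (auto simp: is_walk_def successively_append_iff successively_Cons
      split: list.splits)

lemma successively_potential_bound:
  assumes "\<And>x y. adj x y \<Longrightarrow> f x \<le> f y + 1" "successively adj p" "p \<noteq> []"
  shows "f (hd p) \<le> f (last p) + (length p - 1)"
  using assms(2,3)
proof (induction p rule: induct_list012)
  case (3 x y zs)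
  then have "f x \<le> f y + 1" using assms(1) by simp
  with 3 show ?case by simp
qed simp_all

lemma gdist_potential_bound:
  assumes "\<And>x y. x \<in> V \<Longrightarrow> y \<in> V \<Longrightarrow> adj x y \<Longrightarrow> f x \<le> f y + 1"
    and "is_walk V adj u v p"
  shows "f u \<le> f v + gdist V adj u v"
proof -
  obtain q where q: "length q = Suc (gdist V adj u v)" "is_walk V adj u v q"
    using shortest_walk_exists[OF assms(2)] .
  have "successively (\<lambda>x y. x \<in> V \<and> y \<in> V \<and> adj x y) q"
    using q(2) unfolding is_walk_def by (auto simp: successively_conv_nth)
  from successively_potential_bound[of _ f, OF _ this] q assms(1) show ?thesis
    by (auto simp: is_walk_def)
qed

lemma gdist_map_le:
  assumes "\<And>x. x \<in> V \<Longrightarrow> f x \<in> V"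
    and "\<And>x y. x \<in> V \<Longrightarrow> y \<in> V \<Longrightarrow> adj x y \<Longrightarrow> adj (f x) (f y)"
    and "is_walk V adj u v p"
  shows "gdist V adj (f u) (f v) \<le> gdist V adj u v"
proof -
  obtain q where q: "length q = Suc (gdist V adj u v)" "is_walk V adj u v q"
    using shortest_walk_exists[OF assms(3)] .
  have "is_walk V adj (f u) (f v) (map f q)"
    using q(2) assms(1,2) unfolding is_walk_def
    by (auto simp: hd_map last_map successively_map elim!: successively_mono)
  from gdist_le_walk[OF this] q(1) show ?thesis by simp
qed

lemma tree_adj_sym: "tree_adj u v \<Longrightarrow> tree_adj v u"
  unfolding tree_adj_def by blast

lemma length_tree_verts: "v \<in> tree_verts l N \<Longrightarrow> length v \<le> l"
  by (simp add: tree_verts_def)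

lemma take_in_tree_verts: "u \<in> tree_verts l N \<Longrightarrow> take k u \<in> tree_verts l N"
  unfolding tree_verts_def by auto

lemma successively_tree_adj_prefixes: "successively tree_adj (prefixes u)"
proof (induction u rule: rev_induct)
  case (snoc x xs)
  then show ?case by (auto simp: successively_append_iff tree_adj_def)
qed simp

lemma is_walk_root_prefixes:
  assumes "u \<in> tree_verts l N"
  shows "is_walk (tree_verts l N) tree_adj [] u (prefixes u)"
proof -
  have "x \<in> tree_verts l N" if "prefix x u" for x
  proof -
    from that have "x = take (length x) u" by (auto simp: prefix_def)
    with take_in_tree_verts[OF assms] show ?thesis by metis
  qed
  then have "set (prefixes u) \<subseteq> tree_verts l N" by auto
  then show ?thesis by (simp add: is_walk_def successively_tree_adj_prefixes)
qed

lemma tree_walk_exists: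
  assumes "u \<in> tree_verts l N" "v \<in> tree_verts l N"
  obtains p where "is_walk (tree_verts l N) tree_adj u v p"
  using is_walk_append[OF is_walk_rev[OF tree_adj_sym is_walk_root_prefixes[OF assms(1)]]
      is_walk_root_prefixes[OF assms(2)]] that by blast

lemma gdist_root_tree:
  assumes "u \<in> tree_verts l N"
  shows "gdist (tree_verts l N) tree_adj u [] = length u"
proof (rule antisym)
  have walk: "is_walk (tree_verts l N) tree_adj u [] (rev (prefixes u))"
    by (rule is_walk_rev[OF tree_adj_sym is_walk_root_prefixes[OF assms]])
  from gdist_le_walk[OF this] show "gdist (tree_verts l N) tree_adj u [] \<le> length u"
    by simp
  have "length x \<le> length y + 1" if "tree_adj x y" for x y :: "'a list"
    using that unfolding tree_adj_def by auto
  from gdist_potential_bound[of _ tree_adj length, OF this walk]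
  show "length u \<le> gdist (tree_verts l N) tree_adj u []" by simp
qed

definition sequential_maps :: "nat \<Rightarrow> (nat \<Rightarrow> 'a set) \<Rightarrow> ((nat \<Rightarrow> 'a) \<Rightarrow> (nat \<Rightarrow> 'a)) set" where
  "sequential_maps l X = {\<phi> \<in> prodX l X \<rightarrow>\<^sub>E prodX l X. sequential l X \<phi>}"

lemma sequential_mapsD:
  "\<phi> \<in> sequential_maps l X \<Longrightarrow> x \<in> prodX l X \<Longrightarrow> \<phi> x \<in> prodX l X"
  "\<phi> \<in> sequential_maps l X \<Longrightarrow> sequential l X \<phi>"
  by (auto simp: sequential_maps_def)

lemma wreath_subset_sequential_maps: "wreath l X M \<subseteq> sequential_maps l X"
  unfolding wreath_def sequential_maps_def by blast

lemma monoid_embeds_subset: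
  assumes "monoid_embeds A W B E" "W' \<subseteq> W"
  shows "monoid_embeds A W' B E"
proof -
  from assms(1) obtain h where "h \<in> W \<rightarrow> E" "inj_on h W" "h (restrict id A) = restrict id B"
    "\<forall>\<phi>\<in>W. \<forall>\<psi>\<in>W. h (compose A \<psi> \<phi>) = compose B (h \<psi>) (h \<phi>)"
    unfolding monoid_embeds_def by blast
  with assms(2) show ?thesis
    unfolding monoid_embeds_def by (intro exI[of _ h]) (auto intro: inj_on_subset)
qed

locale tree_coding =
  fixes l :: nat and X :: "nat \<Rightarrow> 'a set" and N :: "nat \<Rightarrow> 'b set"
    and G :: "nat \<Rightarrow> 'a \<Rightarrow> 'b" and d :: "nat \<Rightarrow> 'a"
  assumes bij_G: "\<And>i. i \<in> {1..l} \<Longrightarrow> bij_betw (G i) (X i) (N i)"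
    and d_in: "\<And>i. i \<in> {1..l} \<Longrightarrow> d i \<in> X i"
begin

definition encode :: "nat \<Rightarrow> (nat \<Rightarrow> 'a) \<Rightarrow> 'b list" where
  "encode k x = map (\<lambda>j. G (Suc j) (x (Suc j))) [0..<k]"

definition decode :: "'b list \<Rightarrow> nat \<Rightarrow> 'a" where
  "decode v = (\<lambda>i\<in>{1..l}. if i \<le> length v then inv_into (X i) (G i) (v ! (i - 1)) else d i)"

lemma length_encode [simp]: "length (encode k x) = k"
  by (simp add: encode_def)

lemma nth_encode: "j < k \<Longrightarrow> encode k x ! j = G (Suc j) (x (Suc j))"
  by (simp add: encode_def)

lemma take_encode: "n \<le> k \<Longrightarrow> take n (encode k x) = encode n x"
  by (simp add: encode_def take_map)

lemma encode_cong: "(\<And>i. i \<in> {1..k} \<Longrightarrow> x i = y i) \<Longrightarrow> encode k x = encode k y"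
  unfolding encode_def by (auto intro!: map_cong)

lemma encode_in_tree_verts:
  assumes "x \<in> prodX l X" "k \<le> l"
  shows "encode k x \<in> tree_verts l N"
  unfolding tree_verts_def
proof (intro CollectI conjI allI impI)
  fix j assume "j < length (encode k x)"
  with assms have "Suc j \<in> {1..l}" "x (Suc j) \<in> X (Suc j)"
    by (auto simp: prodX_def)
  then have "G (Suc j) (x (Suc j)) \<in> N (Suc j)" by (meson bij_G bij_betw_apply)
  with \<open>j < length (encode k x)\<close> show "encode k x ! j \<in> N (Suc j)"
    by (simp add: nth_encode)
qed (use assms in simp)

lemma decode_in_prodX:
  assumes "v \<in> tree_verts l N"
  shows "decode v \<in> prodX l X"
  unfolding prodX_def decode_def restrict_PiE_iff
proof
  fix i assume i: "i \<in> {1..l}"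
  show "(if i \<le> length v then inv_into (X i) (G i) (v ! (i - 1)) else d i) \<in> X i"
  proof (cases "i \<le> length v")
    case True
    with assms i have "v ! (i - 1) \<in> N i"
      by (auto simp: tree_verts_def dest: spec[of _ "i - 1"])
    with bij_G[OF i] True show ?thesis by (simp add: bij_betw_def inv_into_into)
  qed (use d_in[OF i] in simp)
qed

lemma decode_encode_eq:
  assumes "x \<in> prodX l X" "k \<le> l" "i \<in> {1..k}"
  shows "decode (encode k x) i = x i"
proof -
  have "i - 1 < k" "Suc (i - 1) = i" using assms(3) by auto
  then have "encode k x ! (i - 1) = G i (x i)" using nth_encode[of "i - 1" k x] by simp
  moreover have "x i \<in> X i" "bij_betw (G i) (X i) (N i)"
    using assms bij_G by (auto simp: prodX_def)
  ultimately show ?thesis using assms by (simp add: decode_def bij_betw_def)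
qed

lemma decode_encode:
  assumes "x \<in> prodX l X"
  shows "decode (encode l x) = x"
proof (rule PiE_ext)
  show "decode (encode l x) \<in> (\<Pi>\<^sub>E i\<in>{1..l}. X i)"
    using decode_in_prodX[OF encode_in_tree_verts[OF assms order_refl]] by (simp add: prodX_def)
  show "x \<in> (\<Pi>\<^sub>E i\<in>{1..l}. X i)" using assms by (simp add: prodX_def)
  show "\<And>i. i \<in> {1..l} \<Longrightarrow> decode (encode l x) i = x i"
    by (rule decode_encode_eq[OF assms order_refl])
qed

lemma encode_decode:
  assumes "v \<in> tree_verts l N"
  shows "encode (length v) (decode v) = v"
proof (rule nth_equalityI)
  fix j assume "j < length (encode (length v) (decode v))"
  with assms have j: "j < length v" "Suc j \<le> l" and "v ! j \<in> N (Suc j)"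
    by (auto simp: tree_verts_def)
  with bij_G[of "Suc j"] have "v ! j \<in> G (Suc j) ` X (Suc j)" by (auto simp: bij_betw_def)
  with j show "encode (length v) (decode v) ! j = v ! j"
    by (simp add: nth_encode decode_def f_inv_into_f)
qed simp

lemma decode_take_eq: "n \<le> length v \<Longrightarrow> i \<in> {1..n} \<Longrightarrow> decode (take n v) i = decode v i"
  unfolding decode_def by auto

lemma sequential_encode_eq:
  assumes "sequential l X \<phi>" "x \<in> prodX l X" "y \<in> prodX l X" "k \<le> l"
    and "\<And>i. i \<in> {1..k} \<Longrightarrow> x i = y i"
  shows "encode k (\<phi> x) = encode k (\<phi> y)"
proof (cases "k = 0")
  case False
  with assms(4) have "k \<in> {1..l}" by simp
  with assms(1,2,3,5) have "\<forall>i\<in>{1..k}. \<phi> x i = \<phi> y i"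
    unfolding sequential_def by blast
  then show ?thesis by (intro encode_cong) auto
qed (simp add: encode_def)

definition tree_action :: "((nat \<Rightarrow> 'a) \<Rightarrow> (nat \<Rightarrow> 'a)) \<Rightarrow> 'b list \<Rightarrow> 'b list" where
  "tree_action \<phi> = (\<lambda>v\<in>tree_verts l N. encode (length v) (\<phi> (decode v)))"

lemma tree_action_in_tree_verts:
  assumes "\<phi> \<in> sequential_maps l X" "v \<in> tree_verts l N"
  shows "tree_action \<phi> v \<in> tree_verts l N" "length (tree_action \<phi> v) = length v"
  using assms encode_in_tree_verts[OF sequential_mapsD(1)[OF assms(1) decode_in_prodX]]
  by (simp_all add: tree_action_def length_tree_verts)

lemma tree_action_encode:
  assumes "\<phi> \<in> sequential_maps l X" "x \<in> prodX l X"
  shows "tree_action \<phi> (encode l x) = encode l (\<phi> x)"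
  using assms by (simp add: tree_action_def encode_in_tree_verts decode_encode)

lemma tree_action_take:
  assumes "\<phi> \<in> sequential_maps l X" "v \<in> tree_verts l N" "n \<le> length v"
  shows "tree_action \<phi> (take n v) = take n (tree_action \<phi> v)"
proof -
  have "n \<le> l" using assms(2,3) length_tree_verts by fastforce
  then have "encode n (\<phi> (decode (take n v))) = encode n (\<phi> (decode v))"
    by (rule sequential_encode_eq[OF sequential_mapsD(2)[OF assms(1)]
          decode_in_prodX[OF take_in_tree_verts[OF assms(2)]] decode_in_prodX[OF assms(2)] _
          decode_take_eq[OF assms(3)]])
  then show ?thesis
    using assms(2,3) take_in_tree_verts[OF assms(2)] by (simp add: tree_action_def take_encode)
qed

lemma tree_action_preserves_adj:
  assumes "\<phi> \<in> sequential_maps l X" "u \<in> tree_verts l N" "v \<in> tree_verts l N" "tree_adj u v"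
  shows "tree_adj (tree_action \<phi> u) (tree_action \<phi> v)"
proof -
  have "tree_action \<phi> (butlast w) = butlast (tree_action \<phi> w) \<and> tree_action \<phi> w \<noteq> []"
    if "w \<in> tree_verts l N" "w \<noteq> []" for w
    using tree_action_take[OF assms(1) that(1), of "length w - 1"]
      tree_action_in_tree_verts(2)[OF assms(1) that(1)] that(2)
    by (simp add: butlast_conv_take) (metis length_0_conv)
  with assms(2-4) show ?thesis unfolding tree_adj_def by metis
qed

lemma tree_action_in_Ell:
  assumes "\<phi> \<in> sequential_maps l X"
  shows "tree_action \<phi> \<in> Ell (tree_verts l N) tree_adj []"
  unfolding Ell_def
proof (intro CollectI conjI ballI)
  show "tree_action \<phi> \<in> tree_verts l N \<rightarrow>\<^sub>E tree_verts l N"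
    using tree_action_in_tree_verts(1)[OF assms] by (auto simp: tree_action_def)
next
  fix u assume "u \<in> tree_verts l N"
  then show "gdist (tree_verts l N) tree_adj (tree_action \<phi> u) []
      = gdist (tree_verts l N) tree_adj u []"
    using tree_action_in_tree_verts[OF assms] by (simp add: gdist_root_tree)
next
  fix u v assume "u \<in> tree_verts l N" "v \<in> tree_verts l N"
  then obtain p where "is_walk (tree_verts l N) tree_adj u v p" by (rule tree_walk_exists)
  then show "gdist (tree_verts l N) tree_adj (tree_action \<phi> u) (tree_action \<phi> v)
      \<le> gdist (tree_verts l N) tree_adj u v"
    by (rule gdist_map_le[rotated 2])
      (use tree_action_in_tree_verts(1)[OF assms] tree_action_preserves_adj[OF assms] in auto)
qed

lemma tree_action_id: "tree_action (restrict id (prodX l X)) = restrict id (tree_verts l N)"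
  by (rule ext) (simp add: tree_action_def decode_in_prodX encode_decode)

lemma tree_action_compose:
  assumes "\<phi> \<in> sequential_maps l X" "\<psi> \<in> sequential_maps l X"
  shows "tree_action (compose (prodX l X) \<psi> \<phi>)
    = compose (tree_verts l N) (tree_action \<psi>) (tree_action \<phi>)"
proof
  fix v show "tree_action (compose (prodX l X) \<psi> \<phi>) v
      = compose (tree_verts l N) (tree_action \<psi>) (tree_action \<phi>) v"
  proof (cases "v \<in> tree_verts l N")
    case True
    let ?x = "\<phi> (decode v)" and ?k = "length v"
    have x: "?x \<in> prodX l X" by (rule sequential_mapsD(1)[OF assms(1) decode_in_prodX[OF True]])
    have k: "?k \<le> l" using True by (rule length_tree_verts)
    have "tree_action \<psi> (tree_action \<phi> v) = encode ?k (\<psi> (decode (encode ?k ?x)))"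
      using tree_action_in_tree_verts[OF assms(1) True] True by (simp add: tree_action_def)
    also have "\<dots> = encode ?k (\<psi> ?x)"
      by (rule sequential_encode_eq[OF sequential_mapsD(2)[OF assms(2)]
            decode_in_prodX[OF encode_in_tree_verts[OF x k]] x k decode_encode_eq[OF x k]])
    finally show ?thesis
      using True decode_in_prodX[OF True] tree_action_in_tree_verts(1)[OF assms(1) True]
      by (simp add: tree_action_def compose_def)
  qed (simp add: tree_action_def compose_def)
qed

lemma inj_on_tree_action: "inj_on tree_action (sequential_maps l X)"
proof (rule inj_onI)
  fix \<phi> \<psi> assume \<phi>: "\<phi> \<in> sequential_maps l X" and \<psi>: "\<psi> \<in> sequential_maps l X"
    and eq: "tree_action \<phi> = tree_action \<psi>"
  show "\<phi> = \<psi>"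
  proof (rule PiE_ext)
    show "\<phi> \<in> prodX l X \<rightarrow>\<^sub>E prodX l X" "\<psi> \<in> prodX l X \<rightarrow>\<^sub>E prodX l X"
      using \<phi> \<psi> by (simp_all add: sequential_maps_def)
  next
    fix x assume x: "x \<in> prodX l X"
    have "encode l (\<phi> x) = encode l (\<psi> x)"
      using eq tree_action_encode[OF \<phi> x] tree_action_encode[OF \<psi> x] by simp
    then show "\<phi> x = \<psi> x"
      using decode_encode[OF sequential_mapsD(1)[OF \<phi> x]]
        decode_encode[OF sequential_mapsD(1)[OF \<psi> x]] by metis
  qed
qed

theorem monoid_embeds_sequential_maps_Ell:
  "monoid_embeds (prodX l X) (sequential_maps l X)
     (tree_verts l N) (Ell (tree_verts l N) tree_adj [])"
  unfolding monoid_embeds_def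
  by (intro exI[of _ tree_action] conjI ballI funcsetI tree_action_in_Ell inj_on_tree_action
      tree_action_id tree_action_compose)

end

theorem corollary3p5:
  fixes l :: nat and X :: "nat \<Rightarrow> 'a set" and M :: "nat \<Rightarrow> ('a \<Rightarrow> 'a) set"
    and N :: "nat \<Rightarrow> 'b set"
  assumes "l \<ge> 1"
    and "\<forall>i\<in>{1..l}. transformation_monoid (X i) (M i)"
    and "\<forall>i\<in>{1..l}. \<exists>g. bij_betw g (X i) (N i)"
  shows "monoid_embeds (prodX l X) (wreath l X M)
           (tree_verts l N) (Ell (tree_verts l N) tree_adj [])"
proof -
  obtain G where G: "\<forall>i\<in>{1..l}. bij_betw (G i) (X i) (N i)"
    using bchoice[OF assms(3)] by blast
  have nonempty: "\<forall>i\<in>{1..l}. \<exists>x. x \<in> X i"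
    using assms(2) unfolding transformation_monoid_def by blast
  obtain d where d: "\<forall>i\<in>{1..l}. d i \<in> X i"
    using bchoice[OF nonempty] by blast
  interpret tree_coding l X N G d
    by unfold_locales (use G d in auto)
  show ?thesis
    using monoid_embeds_sequential_maps_Ell wreath_subset_sequential_maps
    by (rule monoid_embeds_subset)
qed

end
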